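(* Let $K\ge 2$. Fix constants $\mu_1,\ldots,\mu_M\ge 0$ and $P_1^{\rm ST},\ldots,P_K^{\rm ST}>0$. For a channel realization $\boldsymbol{\alpha}$ consider the problem $$\max_{p_1,\ldots,p_K}\ \log\Big(1+\sum_{k=1}^K h_kp_k\Big)-\sum_{m=1}^M\mu_m\sum_{k=1}^K g_{km}p_k\quad\text{s.t.}\quad 0\le p_k\le P_k^{\rm ST}\ \ \forall k.$$ Let $\pi$ be a permutation of $\{1,\ldots,K\}$ with $\frac{h_{\pi(1)}}{\sum_m\mu_m g_{\pi(1)m}}\ge\frac{h_{\pi(2)}}{\sum_m\mu_m g_{\pi(2)m}}\ge\cdots\ge\frac{h_{\pi(K)}}{\sum_m\mu_m g_{\pi(K)m}}$. Then, for almost every realization $\boldsymbol{\alpha}$, the optimal solution has at most one user with positive power (D-TDMA is optimal) if and only if $$1+h_{\pi(1)}P_{\pi(1)}^{\rm ST}\ \ge\ \frac{h_{\pi(2)}}{\sum_{m=1}^M\mu_m g_{\pi(2)m}} .$$ In that case user $\pi(1)$ is the one selected for transmission, with optimal power $$p_{\pi(1)}^*=\min\Big(P_{\pi(1)}^{\rm ST},\ \Big(\frac{1}{\sum_{m=1}^M\mu_m g_{\pi(1)m}}-\frac{1}{h_{\pi(1)}}\Big)^+\Big),$$ and all other users have zero power.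
   Context: $\boldsymbol{\alpha}=(h_1,\ldots,h_K,g_{11},\ldots,g_{KM})$ is a random vector of nonnegative channel power gains ($h_k$: secondary user $k$ to secondary base station; $g_{km}$: secondary user $k$ to primary receiver $m$) with a continuous, differentiable joint cumulative distribution function, the $h_k$'s and $g_{km}$'s being independent. This per-fading-state problem arises (with $\mu_m$ the multipliers of long-term interference-power constraints) in maximizing the ergodic sum rate of the fading cognitive multiple-access channel under short-term transmit-power and long-term interference-power constraints. Conventions: $1/0=+\infty$, $x/0=+\infty$ for $x>0$, $(x)^+=\max(0,x)$. *)

theory Defs
  imports "HOL-Probability.Probability"
begin

text \<open>Users are indexed by a finite type 'k (K = CARD('k)), primary receivers by a
finite type 'm (M = CARD('m)). A channel realization is a pair
(h, g) with h :: real^'k (h_k) and g :: real^('k \<times> 'm) (g_km).\<close>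

definition wgain :: "('m::finite \<Rightarrow> real) \<Rightarrow> real^('k::finite \<times> 'm) \<Rightarrow> 'k \<Rightarrow> real" where
  "wgain mu g k = (\<Sum>m\<in>UNIV. mu m * g $ (k, m))"

text \<open>Extended-real quotient with the conventions x/0 = +infinity for x > 0
(and 0/0 taken to be 0; this case is irrelevant almost surely).\<close>
definition eratio :: "real \<Rightarrow> real \<Rightarrow> ereal" where
  "eratio x y = (if y = 0 then (if x > 0 then \<infinity> else 0) else ereal (x / y))"

definition einv :: "real \<Rightarrow> ereal" where
  "einv x = (if x = 0 then \<infinity> else ereal (1 / x))"

definition objective :: "('m::finite \<Rightarrow> real) \<Rightarrow> real^('k::finite) \<Rightarrow> real^('k \<times> 'm) \<Rightarrow> ('k \<Rightarrow> real) \<Rightarrow> real" where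
  "objective mu h g p =
     ln (1 + (\<Sum>k\<in>UNIV. h $ k * p k)) - (\<Sum>m\<in>UNIV. mu m * (\<Sum>k\<in>UNIV. g $ (k, m) * p k))"

definition feasible :: "('k \<Rightarrow> real) \<Rightarrow> ('k \<Rightarrow> real) \<Rightarrow> bool" where
  "feasible Pst p \<longleftrightarrow> (\<forall>k. 0 \<le> p k \<and> p k \<le> Pst k)"

definition optimal_power ::
  "('m::finite \<Rightarrow> real) \<Rightarrow> ('k::finite \<Rightarrow> real) \<Rightarrow> real^'k \<Rightarrow> real^('k \<times> 'm) \<Rightarrow> ('k \<Rightarrow> real) \<Rightarrow> bool" where
  "optimal_power mu Pst h g p \<longleftrightarrow>
     feasible Pst p \<and> (\<forall>q. feasible Pst q \<longrightarrow> objective mu h g q \<le> objective mu h g p)"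

text \<open>pi : {0..<K} -> users is a bijection ordering the users by nonincreasing
ratio h_k / (sum_m mu_m g_km); pi 0, pi 1 are the paper's pi(1), pi(2).\<close>
definition sorted_perm ::
  "('m::finite \<Rightarrow> real) \<Rightarrow> real^('k::finite) \<Rightarrow> real^('k \<times> 'm) \<Rightarrow> (nat \<Rightarrow> 'k) \<Rightarrow> bool" where
  "sorted_perm mu h g \<pi> \<longleftrightarrow>
     bij_betw \<pi> {..<CARD('k)} UNIV \<and>
     (\<forall>i j. i \<le> j \<longrightarrow> j < CARD('k) \<longrightarrow>
        eratio (h $ \<pi> j) (wgain mu g (\<pi> j)) \<le> eratio (h $ \<pi> i) (wgain mu g (\<pi> i)))"

definition tdma_power ::
  "('m::finite \<Rightarrow> real) \<Rightarrow> ('k::finite \<Rightarrow> real) \<Rightarrow> real^'k \<Rightarrow> real^('k \<times> 'm) \<Rightarrow> 'k \<Rightarrow> 'k \<Rightarrow> real" where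
  "tdma_power mu Pst h g u k =
     (if k = u then real_of_ereal (min (ereal (Pst u)) (max 0 (einv (wgain mu g u) - einv (h $ u))))
      else 0)"

definition joint_cdf ::
  "'a measure \<Rightarrow> ('a \<Rightarrow> real^('k::finite)) \<Rightarrow> ('a \<Rightarrow> real^('k \<times> 'm::finite))
     \<Rightarrow> (real^'k) \<times> (real^('k \<times> 'm)) \<Rightarrow> real" where
  "joint_cdf M h g z = measure M {\<omega>\<in>space M. (\<forall>k. h \<omega> $ k \<le> fst z $ k) \<and> (\<forall>i. g \<omega> $ i \<le> snd z $ i)}"

definition gains :: "('a \<Rightarrow> real^('k::finite)) \<Rightarrow> ('a \<Rightarrow> real^('k \<times> 'm::finite)) \<Rightarrow> 'k + ('k \<times> 'm) \<Rightarrow> 'a \<Rightarrow> real" where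
  "gains h g i = (case i of Inl k \<Rightarrow> (\<lambda>\<omega>. h \<omega> $ k) | Inr km \<Rightarrow> (\<lambda>\<omega>. g \<omega> $ km))"

end

theory Submission
  imports Defs
begin

text \<open>With c k the weighted interference gain of user k, the per-state problem maximises the concave
  function ln (1 + \<Sum>k. h k p k) - \<Sum>k. c k p k over a box, so its maximisers are exactly its KKT
  points: writing S for the argument of the logarithm, a user with h k / c k > S is at full power
  and one with h k / c k < S is silent. When the ratios are distinct at most one user sits at the
  level S, which makes the maximiser unique. Letting only the best user transmit puts the level at
  min (1 + h P) (max 1 (h / c)) of that user, and this is a KKT point exactly when the second best
  ratio does not exceed 1 + h P; otherwise every maximiser has two active users.
  Genericity holds almost surely: a continuous joint distribution function has atomless marginals,
  so all gains are positive, and h k is independent of the gains that determine the value at which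
  the ratios of users k and j would tie.\<close>

section \<open>The per-state concave program\<close>

definition rx_sum :: "('k::finite \<Rightarrow> real) \<Rightarrow> ('k \<Rightarrow> real) \<Rightarrow> real" where
  "rx_sum h p = 1 + (\<Sum>k\<in>UNIV. h k * p k)"

definition utility :: "('k::finite \<Rightarrow> real) \<Rightarrow> ('k \<Rightarrow> real) \<Rightarrow> ('k \<Rightarrow> real) \<Rightarrow> real" where
  "utility h c p = ln (rx_sum h p) - (\<Sum>k\<in>UNIV. c k * p k)"

definition marginal :: "('k::finite \<Rightarrow> real) \<Rightarrow> ('k \<Rightarrow> real) \<Rightarrow> ('k \<Rightarrow> real) \<Rightarrow> 'k \<Rightarrow> real" where
  "marginal h c p k = h k / rx_sum h p - c k"

definition is_max :: "('k::finite \<Rightarrow> real) \<Rightarrow> ('k \<Rightarrow> real) \<Rightarrow> ('k \<Rightarrow> real) \<Rightarrow> ('k \<Rightarrow> real) \<Rightarrow> bool" where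
  "is_max P h c p \<longleftrightarrow> feasible P p \<and> (\<forall>q. feasible P q \<longrightarrow> utility h c q \<le> utility h c p)"

definition kkt :: "('k::finite \<Rightarrow> real) \<Rightarrow> ('k \<Rightarrow> real) \<Rightarrow> ('k \<Rightarrow> real) \<Rightarrow> ('k \<Rightarrow> real) \<Rightarrow> bool" where
  "kkt P h c p \<longleftrightarrow>
     (\<forall>k. (0 < marginal h c p k \<longrightarrow> p k = P k) \<and> (marginal h c p k < 0 \<longrightarrow> p k = 0))"

lemma sum_mult_fun_upd:
  fixes f p :: "'k::finite \<Rightarrow> real"
  shows "(\<Sum>j\<in>UNIV. f j * (p(k := t)) j) = (\<Sum>j\<in>UNIV. f j * p j) + f k * (t - p k)"
proof -
  have "(\<Sum>j\<in>UNIV. f j * (p(k := t)) j) = (\<Sum>j\<in>UNIV. f j * p j + (if j = k then f k * (t - p k) else 0))"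
    by (rule sum.cong) (auto simp: algebra_simps)
  then show ?thesis by (simp add: sum.distrib)
qed

lemma rx_sum_ge_1: "(\<forall>k. 0 \<le> h k) \<Longrightarrow> feasible P p \<Longrightarrow> 1 \<le> rx_sum h p"
  unfolding rx_sum_def feasible_def by (auto intro!: sum_nonneg)

lemma utility_diff_eq:
  assumes "0 < rx_sum h p"
  shows "utility h c q - utility h c p =
    (ln (rx_sum h q) - ln (rx_sum h p) - (rx_sum h q - rx_sum h p) / rx_sum h p)
    + (\<Sum>k\<in>UNIV. marginal h c p k * (q k - p k))"
proof -
  have "(\<Sum>k\<in>UNIV. marginal h c p k * (q k - p k)) =
      (\<Sum>k\<in>UNIV. h k * q k - h k * p k) / rx_sum h p - (\<Sum>k\<in>UNIV. c k * q k) + (\<Sum>k\<in>UNIV. c k * p k)"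
    by (simp add: marginal_def sum_divide_distrib sum_subtractf[symmetric] sum.distrib[symmetric]
        algebra_simps diff_divide_distrib)
  also have "(\<Sum>k\<in>UNIV. h k * q k - h k * p k) = rx_sum h q - rx_sum h p"
    by (simp add: rx_sum_def sum_subtractf)
  finally show ?thesis unfolding utility_def by simp
qed

lemma kkt_marginal_mult_nonpos:
  assumes "kkt P h c p" "feasible P p" "feasible P q"
  shows "marginal h c p k * (q k - p k) \<le> 0"
proof -
  have "0 \<le> q k" "q k \<le> P k" "0 \<le> p k" using assms(2,3) unfolding feasible_def by auto
  then show ?thesis using assms(1) unfolding kkt_def
    by (cases "0 < marginal h c p k"; cases "marginal h c p k < 0")
       (auto simp: mult_nonpos_nonneg mult_nonneg_nonpos)
qed

text \<open>The utility is concave and its gradient is the marginal, so the KKT conditions are sufficient: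
  the gain over a KKT point splits into a nonpositive logarithmic remainder and a nonpositive linear term.\<close>

lemma kkt_imp_is_max:
  assumes h: "\<forall>k. 0 \<le> h k" and p: "feasible P p" and K: "kkt P h c p"
  shows "is_max P h c p"
  unfolding is_max_def
proof (intro conjI allI impI p)
  fix q assume q: "feasible P q"
  have S: "1 \<le> rx_sum h p" "1 \<le> rx_sum h q" using rx_sum_ge_1[OF h] p q by auto
  have "ln (rx_sum h q) - ln (rx_sum h p) - (rx_sum h q - rx_sum h p) / rx_sum h p \<le> 0"
    using ln_diff_le[of "rx_sum h q" "rx_sum h p"] S by simp
  moreover have "(\<Sum>k\<in>UNIV. marginal h c p k * (q k - p k)) \<le> 0"
    by (rule sum_nonpos) (use kkt_marginal_mult_nonpos[OF K p q] in auto)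
  ultimately show "utility h c q \<le> utility h c p" using utility_diff_eq[of h p c q] S by simp
qed

lemma kkt_is_max_unique:
  assumes h: "\<forall>k. 0 < h k" and p: "feasible P p" and K: "kkt P h c p" and q: "is_max P h c q"
    and single_zero: "\<And>k j. marginal h c p k = 0 \<Longrightarrow> marginal h c p j = 0 \<Longrightarrow> k = j"
  shows "q = p"
proof -
  have qf: "feasible P q" and qo: "utility h c p \<le> utility h c q" using q p unfolding is_max_def by auto
  have S: "1 \<le> rx_sum h p" "1 \<le> rx_sum h q" using rx_sum_ge_1 h p qf less_imp_le by metis+
  define A where "A = ln (rx_sum h q) - ln (rx_sum h p) - (rx_sum h q - rx_sum h p) / rx_sum h p"
  have terms: "\<And>k. marginal h c p k * (q k - p k) \<le> 0" using kkt_marginal_mult_nonpos[OF K p qf] .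
  have A: "A \<le> 0" unfolding A_def using ln_diff_le[of "rx_sum h q" "rx_sum h p"] S by simp
  have B: "(\<Sum>k\<in>UNIV. marginal h c p k * (q k - p k)) \<le> 0" by (rule sum_nonpos) (use terms in auto)
  have "0 \<le> A + (\<Sum>k\<in>UNIV. marginal h c p k * (q k - p k))"
    using utility_diff_eq[of h p c q] S qo unfolding A_def by simp
  then have A0: "A = 0" and B0: "(\<Sum>k\<in>UNIV. marginal h c p k * (q k - p k)) = 0" using A B by auto
  have same_rx: "rx_sum h q = rx_sum h p"
    using A0 ln_diff_less[of "rx_sum h q" "rx_sum h p"] S unfolding A_def by force
  have zero_terms: "\<And>k. marginal h c p k * (q k - p k) = 0"
    using B0 terms sum_nonneg_eq_0_iff[of UNIV "\<lambda>k. - (marginal h c p k * (q k - p k))"]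
    by (simp add: sum_negf)
  show "q = p"
  proof (rule ccontr)
    assume "q \<noteq> p"
    then obtain k0 where k0: "q k0 \<noteq> p k0" by auto
    then have "marginal h c p k0 = 0" using zero_terms[of k0] by simp
    then have others: "\<And>j. j \<noteq> k0 \<Longrightarrow> q j = p j" using single_zero zero_terms by (metis mult_eq_0_iff right_minus_eq)
    have "rx_sum h q = rx_sum h (p(k0 := q k0))"
      unfolding rx_sum_def by (intro arg_cong[where f="\<lambda>s. 1 + s"] sum.cong) (auto simp: others)
    then have "h k0 * (q k0 - p k0) = 0" using same_rx unfolding rx_sum_def sum_mult_fun_upd by simp
    then show False using k0 h[rule_format, of k0] by simp
  qed
qed

lemma utility_fun_upd_has_derivative:
  assumes "0 < rx_sum h p"
  shows "((\<lambda>t. utility h c (p(k := t))) has_real_derivative marginal h c p k) (at (p k))"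
proof -
  have eq: "(\<lambda>t. utility h c (p(k := t))) =
      (\<lambda>t. ln (rx_sum h p + h k * (t - p k)) - ((\<Sum>j\<in>UNIV. c j * p j) + c k * (t - p k)))"
    unfolding utility_def rx_sum_def sum_mult_fun_upd by (simp add: add.assoc)
  show ?thesis unfolding eq marginal_def
    by (rule derivative_eq_intros refl | use assms in simp)+
qed

text \<open>Conversely, a maximiser satisfies the KKT conditions: if a marginal had the wrong sign, moving that
  single power slightly in the direction of the marginal would stay feasible and increase the utility.\<close>

lemma is_max_imp_kkt:
  assumes h: "\<forall>k. 0 \<le> h k" and max: "is_max P h c p"
  shows "kkt P h c p"
  unfolding kkt_def
proof (intro allI conjI impI)
  fix k
  have p: "feasible P p" and better: "\<And>q. feasible P q \<Longrightarrow> utility h c q \<le> utility h c p"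
    using max unfolding is_max_def by auto
  have pk: "0 \<le> p k" "p k \<le> P k" using p unfolding feasible_def by auto
  have feasible_upd: "feasible P (p(k := t))" if "0 \<le> t" "t \<le> P k" for t
    using p that unfolding feasible_def by auto
  note D = utility_fun_upd_has_derivative[OF order.strict_trans2[OF zero_less_one rx_sum_ge_1[OF h p]]]
  show "p k = P k" if pos: "0 < marginal h c p k"
  proof (rule ccontr)
    assume "p k \<noteq> P k"
    obtain d where d: "0 < d" "\<And>e. 0 < e \<Longrightarrow> e < d \<Longrightarrow> utility h c p < utility h c (p(k := p k + e))"
      using DERIV_pos_inc_right[OF D pos] by auto
    define e where "e = min (d / 2) (P k - p k)"
    have e: "0 < e" "e < d" "p k + e \<le> P k" using d(1) pk \<open>p k \<noteq> P k\<close> by (auto simp: e_def)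
    then have "utility h c (p(k := p k + e)) \<le> utility h c p" using pk by (intro better feasible_upd) auto
    then show False using d(2)[OF e(1,2)] by simp
  qed
  show "p k = 0" if neg: "marginal h c p k < 0"
  proof (rule ccontr)
    assume "p k \<noteq> 0"
    obtain d where d: "0 < d" "\<And>e. 0 < e \<Longrightarrow> e < d \<Longrightarrow> utility h c p < utility h c (p(k := p k - e))"
      using DERIV_neg_dec_left[OF D neg] by auto
    define e where "e = min (d / 2) (p k)"
    have e: "0 < e" "e < d" "e \<le> p k" using d(1) pk \<open>p k \<noteq> 0\<close> by (auto simp: e_def)
    then have "utility h c (p(k := p k - e)) \<le> utility h c p" using pk by (intro better feasible_upd) auto
    then show False using d(2)[OF e(1,2)] by simp
  qed
qed

lemma is_max_exists:
  fixes h :: "'k::finite \<Rightarrow> real"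
  assumes h: "\<forall>k. 0 \<le> h k" and P: "\<forall>k. 0 \<le> P k"
  shows "\<exists>p. is_max P h c p"
proof -
  define B where "B = cbox (0::real^'k) (\<chi> k. P k)"
  have B_iff: "x \<in> B \<longleftrightarrow> feasible P (\<lambda>k. x $ k)" for x
    unfolding B_def feasible_def by (auto simp: mem_box_cart)
  have "1 \<le> rx_sum h (\<lambda>k. x $ k)" if "x \<in> B" for x
    using rx_sum_ge_1[OF h] that B_iff by blast
  then have "continuous_on B (\<lambda>x. utility h c (\<lambda>k. x $ k))"
    unfolding utility_def rx_sum_def by (intro continuous_intros) force+
  moreover have "0 \<in> B" unfolding B_def using P by (auto simp: mem_box_cart)
  ultimately obtain x where x: "x \<in> B" "\<forall>y\<in>B. utility h c (\<lambda>k. y $ k) \<le> utility h c (\<lambda>k. x $ k)"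
    using continuous_attains_sup[of B] unfolding B_def by (auto simp: compact_cbox)
  have "is_max P h c (\<lambda>k. x $ k)"
    unfolding is_max_def
  proof (intro conjI allI impI)
    show "feasible P (\<lambda>k. x $ k)" using x(1) B_iff by blast
    show "utility h c q \<le> utility h c (\<lambda>k. x $ k)" if "feasible P q" for q
      using x(2) B_iff[of "\<chi> k. q k"] that by fastforce
  qed
  then show ?thesis by blast
qed

section \<open>Single-user optimality\<close>

lemma full_power_is_max:
  assumes h: "\<forall>k. 0 \<le> h k" and P: "\<forall>k. 0 \<le> P k"
  shows "is_max P h (\<lambda>_. 0) P"
proof -
  have p: "feasible P P" using P unfolding feasible_def by simp
  have "\<not> marginal h (\<lambda>_. 0) P k < 0" for k
    using rx_sum_ge_1[OF h p] h unfolding marginal_def by (simp add: not_less)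
  then have "kkt P h (\<lambda>_. 0) P" unfolding kkt_def by blast
  then show ?thesis using kkt_imp_is_max[OF h p] by blast
qed

lemma rx_sum_single_support:
  assumes "\<And>k. k \<noteq> u \<Longrightarrow> p k = 0"
  shows "rx_sum h p = 1 + h u * p u"
proof -
  have "(\<Sum>k\<in>UNIV. h k * p k) = (\<Sum>k\<in>UNIV. if k = u then h u * p u else 0)"
    by (rule sum.cong) (auto simp: assms)
  then show ?thesis by (simp add: rx_sum_def)
qed

definition single_user_power :: "('k \<Rightarrow> real) \<Rightarrow> ('k \<Rightarrow> real) \<Rightarrow> ('k \<Rightarrow> real) \<Rightarrow> 'k \<Rightarrow> 'k \<Rightarrow> real" where
  "single_user_power P h c u k = (if k = u then min (P u) (max 0 (1 / c u - 1 / h u)) else 0)"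

lemma card_single_user_power_le_1: "card {k. 0 < single_user_power P h c u k} \<le> 1"
proof -
  have "{k. 0 < single_user_power P h c u k} \<subseteq> {u}" by (auto simp: single_user_power_def)
  then have "card {k. 0 < single_user_power P h c u k} \<le> card {u}" by (intro card_mono) auto
  then show ?thesis by simp
qed

locale distinct_ratios =
  fixes P h c :: "'k::finite \<Rightarrow> real"
  assumes P_pos: "0 < P k" and h_pos: "0 < h k" and c_pos: "0 < c k"
    and ratios_inj: "inj (\<lambda>k. h k / c k)"
begin

lemma marginal_sign_iff:
  assumes "0 < rx_sum h p"
  shows "0 < marginal h c p k \<longleftrightarrow> rx_sum h p < h k / c k"
    and "marginal h c p k < 0 \<longleftrightarrow> h k / c k < rx_sum h p"
    and "marginal h c p k = 0 \<longleftrightarrow> h k / c k = rx_sum h p"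
  using assms c_pos[of k] by (simp_all add: marginal_def field_simps)

lemma rx_sum_pos: "feasible P p \<Longrightarrow> 0 < rx_sum h p"
  using rx_sum_ge_1[of h P p] h_pos by (simp add: less_imp_le)

lemma kkt_unique:
  assumes "feasible P p" "kkt P h c p" "is_max P h c q"
  shows "q = p"
proof (rule kkt_is_max_unique[OF _ assms])
  show "\<forall>k. 0 < h k" by (simp add: h_pos)
  show "k = j" if "marginal h c p k = 0" "marginal h c p j = 0" for k j
    using that marginal_sign_iff(3)[OF rx_sum_pos[OF assms(1)]] inj_onD[OF ratios_inj] by simp
qed

text \<open>The received level of the single-user allocation is the water level
  min (1 + h u * P u) (max 1 (h u / c u)); a user other than u stays silent
  as long as its ratio does not exceed it.\<close>

lemma single_user_power_kkt:
  assumes others: "\<And>k. k \<noteq> u \<Longrightarrow> h k / c k \<le> min (1 + h u * P u) (h u / c u)"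
  shows "kkt P h c (single_user_power P h c u)"
proof -
  define t where "t = single_user_power P h c u"
  define S where "S = rx_sum h t"
  have hu: "0 < h u" "0 < c u" using h_pos c_pos by auto
  have Su: "S = 1 + h u * t u" unfolding S_def
    by (rule rx_sum_single_support) (simp add: t_def single_user_power_def)
  have tu: "0 \<le> t u" "t u \<le> P u" using P_pos[of u] by (auto simp: t_def single_user_power_def)
  have "S = 1 + h u * min (P u) (max 0 (1 / c u - 1 / h u))"
    by (simp add: Su t_def single_user_power_def)
  also have "\<dots> = min (1 + h u * P u) (max 1 (1 + h u * (1 / c u - 1 / h u)))"
    using hu by (simp add: min_mult_distrib_left max_mult_distrib_left min_add_distrib_right
        max_add_distrib_right)
  also have "1 + h u * (1 / c u - 1 / h u) = h u / c u" using hu by (simp add: field_simps)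
  finally have level: "S = min (1 + h u * P u) (max 1 (h u / c u))" .
  have S0: "0 < S" using Su tu hu by (simp add: add_pos_nonneg)
  note sign = marginal_sign_iff[OF S0[unfolded S_def]]
  have "t u = P u" if "S < h u / c u"
  proof -
    have "S = 1 + h u * P u" using that level by (auto simp: min_def max_def split: if_splits)
    then show ?thesis using Su hu by simp
  qed
  moreover have "t u = 0" if "h u / c u < S"
  proof -
    have "S \<le> 1" using that level by (auto simp: min_def max_def split: if_splits)
    then show ?thesis using Su tu hu by (smt (verit) mult_pos_pos)
  qed
  moreover have "\<not> S < h k / c k" if "k \<noteq> u" for k
    using others[OF that] level by linarith
  ultimately show ?thesis
    unfolding kkt_def t_def[symmetric] sign S_def[symmetric]
    by (metis single_user_power_def t_def)
qed

lemma feasible_single_user_power: "feasible P (single_user_power P h c u)"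
  using P_pos by (auto simp: feasible_def single_user_power_def less_imp_le)

lemma single_user_power_is_max_iff:
  assumes "\<And>k. k \<noteq> u \<Longrightarrow> h k / c k \<le> min (1 + h u * P u) (h u / c u)"
  shows "is_max P h c p \<longleftrightarrow> p = single_user_power P h c u"
  using kkt_imp_is_max kkt_unique feasible_single_user_power single_user_power_kkt[OF assms]
    h_pos less_imp_le by metis

text \<open>An active user j other than u next to a silent u would need h u / c u \<le> S \<le> h j / c j;
  and if only u may be active, the level stays at most 1 + h u * P u, below the ratio of v,
  which forces v to full power.\<close>

lemma is_max_two_active:
  assumes max: "is_max P h c p" and "v \<noteq> u" and best: "\<And>k. k \<noteq> u \<Longrightarrow> h k / c k < h u / c u"
    and short: "1 + h u * P u < h v / c v"
  shows "1 < card {k. 0 < p k}"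
proof (rule ccontr)
  assume "\<not> 1 < card {k. 0 < p k}"
  then have single: "a = b" if "0 < p a" "0 < p b" for a b
    using that card_le_Suc0_iff_eq[of "{k. 0 < p k}"] by auto
  have p: "feasible P p" using max unfolding is_max_def by blast
  then have p_nonneg: "0 \<le> p k" for k unfolding feasible_def by blast
  have K: "kkt P h c p" using is_max_imp_kkt max h_pos less_imp_le by metis
  note sign = marginal_sign_iff[OF rx_sum_pos[OF p]]
  show False
  proof (cases "\<exists>j. j \<noteq> u \<and> 0 < p j")
    case True
    then obtain j where j: "j \<noteq> u" "0 < p j" by blast
    then have "p u = 0" using single[of u j] p_nonneg[of u] by force
    then have "h u / c u \<le> rx_sum h p" "rx_sum h p \<le> h j / c j"
      using K j P_pos[of u] unfolding kkt_def sign by (metis less_irrefl not_le)+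
    then show False using best[OF j(1)] by simp
  next
    case False
    then have "p k = 0" if "k \<noteq> u" for k using p_nonneg[of k] that by force
    then have "rx_sum h p = 1 + h u * p u" by (rule rx_sum_single_support)
    also have "\<dots> \<le> 1 + h u * P u" using p h_pos[of u] unfolding feasible_def by simp
    finally have "p v = P v" using K short unfolding kkt_def sign by simp
    then show False using False P_pos[of v] \<open>v \<noteq> u\<close> by auto
  qed
qed

lemma single_user_optimal_iff:
  assumes "v \<noteq> u" and first: "\<And>k. h k / c k \<le> h u / c u"
    and second: "\<And>k. k \<noteq> u \<Longrightarrow> h k / c k \<le> h v / c v"
  shows "(\<forall>p. is_max P h c p \<longrightarrow> card {k. 0 < p k} \<le> 1) \<longleftrightarrow> h v / c v \<le> 1 + h u * P u"
    and "h v / c v \<le> 1 + h u * P u \<Longrightarrow> is_max P h c p \<longleftrightarrow> p = single_user_power P h c u"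
proof -
  show iff: "is_max P h c p \<longleftrightarrow> p = single_user_power P h c u" if "h v / c v \<le> 1 + h u * P u" for p
    using that first second by (intro single_user_power_is_max_iff) (meson min.bounded_iff order_trans)
  have best: "h k / c k < h u / c u" if "k \<noteq> u" for k
    using first[of k] inj_onD[OF ratios_inj, of k u] that by fastforce
  show "(\<forall>p. is_max P h c p \<longrightarrow> card {k. 0 < p k} \<le> 1) \<longleftrightarrow> h v / c v \<le> 1 + h u * P u"
  proof
    assume all_single: "\<forall>p. is_max P h c p \<longrightarrow> card {k. 0 < p k} \<le> 1"
    obtain p where p: "is_max P h c p" using is_max_exists h_pos P_pos less_imp_le by metis
    show "h v / c v \<le> 1 + h u * P u"
      using is_max_two_active[OF p assms(1) best] all_single p by (meson not_le)
  next
    assume "h v / c v \<le> 1 + h u * P u"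
    then show "\<forall>p. is_max P h c p \<longrightarrow> card {k. 0 < p k} \<le> 1"
      using iff card_single_user_power_le_1 by simp
  qed
qed

end

lemma objective_eq_utility:
  fixes hv :: "real^'k::finite" and gv :: "real^('k \<times> 'm::finite)"
  shows "objective mu hv gv = utility (($) hv) (wgain mu gv)"
proof
  fix p :: "'k \<Rightarrow> real"
  have "(\<Sum>m\<in>UNIV. mu m * (\<Sum>k\<in>UNIV. gv $ (k, m) * p k)) = (\<Sum>m\<in>UNIV. \<Sum>k\<in>UNIV. mu m * gv $ (k, m) * p k)"
    by (simp add: sum_distrib_left mult.assoc)
  also have "\<dots> = (\<Sum>k\<in>UNIV. \<Sum>m\<in>UNIV. mu m * gv $ (k, m) * p k)" by (rule sum.swap)
  also have "\<dots> = (\<Sum>k\<in>UNIV. wgain mu gv k * p k)" by (simp add: wgain_def sum_distrib_right)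
  finally show "objective mu hv gv p = utility (($) hv) (wgain mu gv) p"
    unfolding objective_def utility_def rx_sum_def by simp
qed

lemma optimal_power_iff_is_max: "optimal_power mu Pst hv gv p \<longleftrightarrow> is_max Pst (($) hv) (wgain mu gv) p"
  unfolding optimal_power_def is_max_def objective_eq_utility ..

lemma tdma_power_eq_single_user_power:
  assumes "0 < wgain mu gv u" "0 < hv $ u"
  shows "tdma_power mu Pst hv gv u = single_user_power Pst (($) hv) (wgain mu gv) u"
proof -
  have "einv (wgain mu gv u) - einv (hv $ u) = ereal (1 / wgain mu gv u - 1 / hv $ u)"
    using assms by (simp add: einv_def)
  then have "min (ereal (Pst u)) (max 0 (einv (wgain mu gv u) - einv (hv $ u)))
      = ereal (min (Pst u) (max 0 (1 / wgain mu gv u - 1 / hv $ u)))"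
    by (simp only: ereal_max_0 ereal_min)
  then show ?thesis
    by (intro ext) (simp only: tdma_power_def single_user_power_def real_of_ereal.simps)
qed

lemma eratio_pos_denom: "0 < y \<Longrightarrow> eratio x y = ereal (x / y)"
  by (simp add: eratio_def)

lemma bij_sorted_first_second:
  fixes f :: "'k \<Rightarrow> 'b::linorder"
  assumes bij: "bij_betw \<pi> {..<n} UNIV" and n: "2 \<le> (n::nat)"
    and sorted: "\<forall>i j. i \<le> j \<longrightarrow> j < n \<longrightarrow> f (\<pi> j) \<le> f (\<pi> i)"
  shows "\<pi> 1 \<noteq> \<pi> 0" and "f k \<le> f (\<pi> 0)" and "k \<noteq> \<pi> 0 \<Longrightarrow> f k \<le> f (\<pi> 1)"
proof -
  show "\<pi> 1 \<noteq> \<pi> 0" using inj_onD[OF bij_betw_imp_inj_on[OF bij], of 1 0] n by auto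
  obtain i where i: "i < n" "k = \<pi> i" using bij_betw_imp_surj_on[OF bij] by (metis UNIV_I imageE lessThan_iff)
  then show "f k \<le> f (\<pi> 0)" using sorted by simp
  show "f k \<le> f (\<pi> 1)" if "k \<noteq> \<pi> 0"
  proof -
    have "1 \<le> i" using i that by (metis less_one not_le)
    then show ?thesis using i sorted by simp
  qed
qed

definition generic_channel :: "('m::finite \<Rightarrow> real) \<Rightarrow> real^'k::finite \<Rightarrow> real^('k \<times> 'm) \<Rightarrow> bool" where
  "generic_channel mu hv gv \<longleftrightarrow> (\<forall>k. 0 < hv $ k) \<and>
     ((\<forall>k. wgain mu gv k = 0) \<or> (\<forall>k. 0 < wgain mu gv k) \<and> inj (\<lambda>k. hv $ k / wgain mu gv k))"

lemma wgain_pos: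
  assumes "\<forall>m. 0 \<le> mu m" "0 < mu m0" "\<forall>km. 0 < gv $ km"
  shows "0 < wgain mu gv k"
  unfolding wgain_def
proof (rule sum_pos2[of UNIV m0])
  show "0 < mu m0 * gv $ (k, m0)" using assms by simp
  show "\<And>m. m \<in> UNIV \<Longrightarrow> 0 \<le> mu m * gv $ (k, m)" using assms by (simp add: less_imp_le)
qed auto

lemma tdma_characterization:
  fixes hv :: "real^'k::finite" and gv :: "real^('k \<times> 'm::finite)"
  assumes K2: "2 \<le> CARD('k)" and P: "\<forall>k. 0 < Pst k" and generic: "generic_channel mu hv gv"
    and sorted: "sorted_perm mu hv gv \<pi>"
  shows "((\<forall>p. optimal_power mu Pst hv gv p \<longrightarrow> card {k. p k > 0} \<le> 1)
            \<longleftrightarrow> ereal (1 + hv $ \<pi> 0 * Pst (\<pi> 0)) \<ge> eratio (hv $ \<pi> 1) (wgain mu gv (\<pi> 1)))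
         \<and> (ereal (1 + hv $ \<pi> 0 * Pst (\<pi> 0)) \<ge> eratio (hv $ \<pi> 1) (wgain mu gv (\<pi> 1))
            \<longrightarrow> (\<forall>p. optimal_power mu Pst hv gv p \<longleftrightarrow> p = tdma_power mu Pst hv gv (\<pi> 0)))"
proof -
  have h: "\<forall>k. 0 < hv $ k" using generic unfolding generic_channel_def by blast
  have bij: "bij_betw \<pi> {..<CARD('k)} UNIV"
    and desc: "\<forall>i j. i \<le> j \<longrightarrow> j < CARD('k) \<longrightarrow>
      eratio (hv $ \<pi> j) (wgain mu gv (\<pi> j)) \<le> eratio (hv $ \<pi> i) (wgain mu gv (\<pi> i))"
    using sorted unfolding sorted_perm_def by auto
  note order = bij_sorted_first_second[OF bij K2 desc]
  from generic consider (free) "\<forall>k. wgain mu gv k = 0"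
    | (priced) "\<forall>k. 0 < wgain mu gv k" "inj (\<lambda>k. hv $ k / wgain mu gv k)"
    unfolding generic_channel_def by blast
  then show ?thesis
  proof cases
    case free
    then have "wgain mu gv = (\<lambda>_. 0)" by auto
    then have "optimal_power mu Pst hv gv Pst"
      unfolding optimal_power_iff_is_max using h P by (simp add: full_power_is_max less_imp_le)
    moreover have "\<not> card {k. 0 < Pst k} \<le> 1" using P K2 by simp
    moreover have "eratio (hv $ \<pi> 1) (wgain mu gv (\<pi> 1)) = \<infinity>" using free h by (simp add: eratio_def)
    ultimately show ?thesis by auto
  next
    case priced
    interpret distinct_ratios Pst "($) hv" "wgain mu gv"
      using P h priced by unfold_locales auto
    have ratio: "eratio (hv $ k) (wgain mu gv k) = ereal (hv $ k / wgain mu gv k)" for k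
      using priced by (simp add: eratio_pos_denom)
    have first: "hv $ k / wgain mu gv k \<le> hv $ \<pi> 0 / wgain mu gv (\<pi> 0)" for k
      using order(2)[of k] by (simp add: ratio)
    have second: "hv $ k / wgain mu gv k \<le> hv $ \<pi> 1 / wgain mu gv (\<pi> 1)" if "k \<noteq> \<pi> 0" for k
      using order(3)[OF that] by (simp add: ratio)
    note single = single_user_optimal_iff[OF order(1) first second]
    show ?thesis
      unfolding optimal_power_iff_is_max ratio ereal_less_eq(3)
      using single tdma_power_eq_single_user_power[of mu gv "\<pi> 0" hv Pst] priced h by auto
  qed
qed

section \<open>Almost-sure genericity of the channel\<close>

lemma (in finite_measure) measure_level_set_eq_0:
  fixes Y :: "'a \<Rightarrow> real"
  assumes [measurable]: "Y \<in> borel_measurable M" "B \<in> sets M"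
    and cont: "continuous (at_left a) (\<lambda>t. measure M ({\<omega>\<in>space M. Y \<omega> \<le> t} \<inter> B))"
  shows "measure M ({\<omega>\<in>space M. Y \<omega> = a} \<inter> B) = 0"
proof -
  define F where "F t = measure M ({\<omega>\<in>space M. Y \<omega> \<le> t} \<inter> B)" for t
  have "((\<lambda>t. F a - F t) \<longlongrightarrow> F a - F a) (at_left a)"
    using cont unfolding F_def continuous_within by (intro tendsto_intros) auto
  moreover have "\<forall>\<^sub>F t in at_left a. t < a" by (simp add: eventually_at_filter)
  then have "\<forall>\<^sub>F t in at_left a. measure M ({\<omega>\<in>space M. Y \<omega> = a} \<inter> B) \<le> F a - F t"
  proof (rule eventually_mono)
    fix t assume "t < a"
    then have sub: "{\<omega>\<in>space M. Y \<omega> \<le> t} \<inter> B \<subseteq> {\<omega>\<in>space M. Y \<omega> \<le> a} \<inter> B" by auto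
    have "measure M ({\<omega>\<in>space M. Y \<omega> = a} \<inter> B)
        \<le> measure M ({\<omega>\<in>space M. Y \<omega> \<le> a} \<inter> B - {\<omega>\<in>space M. Y \<omega> \<le> t} \<inter> B)"
      using \<open>t < a\<close> by (intro finite_measure_mono) auto
    also have "\<dots> = F a - F t" unfolding F_def using sub by (intro finite_measure_Diff) auto
    finally show "measure M ({\<omega>\<in>space M. Y \<omega> = a} \<inter> B) \<le> F a - F t" .
  qed
  ultimately have "measure M ({\<omega>\<in>space M. Y \<omega> = a} \<inter> B) \<le> 0"
    using tendsto_lowerbound trivial_limit_at_left_real by fastforce
  then show ?thesis by (simp add: measure_le_0_iff)
qed

lemma gains_Inl [simp]: "gains h g (Inl k) = (\<lambda>\<omega>. h \<omega> $ k)"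
  and gains_Inr [simp]: "gains h g (Inr km) = (\<lambda>\<omega>. g \<omega> $ km)"
  by (simp_all add: gains_def)

text \<open>The mass of X i = a on the event that all other gains stay below N is a jump of the
  distribution function in its i-th argument, and N is arbitrary.\<close>

lemma (in prob_space) AE_gains_neq:
  fixes h :: "'a \<Rightarrow> real^'k::finite" and g :: "'a \<Rightarrow> real^('k \<times> 'm::finite)"
  assumes rv: "\<And>j. gains h g j \<in> borel_measurable M"
    and cont: "continuous_on UNIV (joint_cdf M h g)"
  shows "AE \<omega> in M. gains h g i \<omega> \<noteq> a"
proof -
  define X where "X = gains h g"
  have [measurable]: "X j \<in> borel_measurable M" for j using rv by (simp add: X_def)
  define B where "B N = {\<omega>\<in>space M. \<forall>j. j \<noteq> i \<longrightarrow> X j \<omega> \<le> real N}" for N :: nat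
  have [measurable]: "B N \<in> sets M" for N unfolding B_def by measurable
  define z where "z t N = ((\<chi> k. if Inl k = i then t else real N), (\<chi> km. if Inr km = i then t else real N))"
    for t and N :: nat
  have cdf: "measure M ({\<omega>\<in>space M. X i \<omega> \<le> t} \<inter> B N) = joint_cdf M h g (z t N)" for t N
    unfolding joint_cdf_def
    by (rule arg_cong[where f="measure M"]) (auto simp: z_def B_def X_def gains_def split: sum.splits)
  have "continuous_on UNIV (\<lambda>t. if j = i then t else real N)" for j N
    by (cases "j = i") simp_all
  then have "continuous_on UNIV (\<lambda>t. joint_cdf M h g (z t N))" for N
    unfolding z_def by (intro continuous_on_compose2[OF cont] continuous_intros) auto
  then have "continuous (at_left a) (\<lambda>t. measure M ({\<omega>\<in>space M. X i \<omega> \<le> t} \<inter> B N))" for N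
    unfolding cdf by (simp add: continuous_on_eq_continuous_at continuous_at_imp_continuous_at_within)
  then have null: "measure M ({\<omega>\<in>space M. X i \<omega> = a} \<inter> B N) = 0" for N
    by (rule measure_level_set_eq_0[rotated 2]) measurable
  have "AE \<omega> in M. \<not> (X i \<omega> = a \<and> \<omega> \<in> B N)" for N
  proof -
    have "{\<omega>\<in>space M. X i \<omega> = a \<and> \<omega> \<in> B N} = {\<omega>\<in>space M. X i \<omega> = a} \<inter> B N" by auto
    with null[of N] have "prob {\<omega>\<in>space M. X i \<omega> = a \<and> \<omega> \<in> B N} = 0" by simp
    moreover have "{\<omega>\<in>space M. X i \<omega> = a \<and> \<omega> \<in> B N} \<in> events" by measurable
    ultimately show ?thesis by (simp only: prob_Collect_eq_0)
  qed
  then have "AE \<omega> in M. \<forall>N. \<not> (X i \<omega> = a \<and> \<omega> \<in> B N)"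
    unfolding AE_all_countable by blast
  then show ?thesis using AE_space
  proof eventually_elim
    case (elim \<omega>)
    then have never: "\<forall>N. \<not> (X i \<omega> = a \<and> \<omega> \<in> B N)" and \<omega>: "\<omega> \<in> space M" by auto
    obtain N :: nat where "Max (range (\<lambda>j. X j \<omega>)) \<le> real N" using real_arch_simple by blast
    then have "\<omega> \<in> B N" using \<omega> Max_ge[of "range (\<lambda>j. X j \<omega>)"] unfolding B_def by fastforce
    then show "gains h g i \<omega> \<noteq> a" using never unfolding X_def by blast
  qed
qed

text \<open>The joint law of independent Y and X is the product of the marginals, and each vertical
  section of the diagonal is a single point, which the atomless law of X does not charge.\<close>

lemma (in prob_space) AE_indep_neq:
  fixes X Y :: "'a \<Rightarrow> real"
  assumes ind: "indep_var borel Y borel X" and atomless: "\<And>a. AE \<omega> in M. X \<omega> \<noteq> a"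
  shows "AE \<omega> in M. Y \<omega> \<noteq> X \<omega>"
proof -
  have [measurable]: "Y \<in> borel_measurable M" "X \<in> borel_measurable M"
    using indep_var_rv1[OF ind] indep_var_rv2[OF ind] by simp_all
  define D where "D = {z::real \<times> real. fst z = snd z}"
  have D: "D \<in> sets (borel \<Otimes>\<^sub>M borel)"
  proof -
    have "{z \<in> space (borel \<Otimes>\<^sub>M borel). fst z = (snd z :: real)} \<in> sets (borel \<Otimes>\<^sub>M borel)"
      by measurable
    then show ?thesis unfolding D_def by (simp add: space_pair_measure)
  qed
  interpret PX: prob_space "distr M borel X" by (rule prob_space_distr) simp
  have "emeasure M {\<omega>\<in>space M. Y \<omega> = X \<omega>} = emeasure (distr M (borel \<Otimes>\<^sub>M borel) (\<lambda>\<omega>. (Y \<omega>, X \<omega>))) D"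
    using D by (subst emeasure_distr) (auto simp: D_def intro!: arg_cong[where f="emeasure M"])
  also have "\<dots> = emeasure (distr M borel Y \<Otimes>\<^sub>M distr M borel X) D"
    using ind unfolding indep_var_distribution_eq by simp
  also have "\<dots> = (\<integral>\<^sup>+y. emeasure (distr M borel X) (Pair y -` D) \<partial>distr M borel Y)"
    using D sets_pair_measure_cong[of "distr M borel Y" borel "distr M borel X" borel]
    by (intro PX.emeasure_pair_measure_alt) simp_all
  also have "\<dots> = (\<integral>\<^sup>+y. 0 \<partial>distr M borel Y)"
  proof (rule nn_integral_cong)
    fix y :: real
    have "Pair y -` D = {y}" unfolding D_def by auto
    then have "emeasure (distr M borel X) (Pair y -` D) = emeasure M {\<omega>\<in>space M. X \<omega> = y}"
      by (simp add: emeasure_distr vimage_def Int_def conj_commute)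
    also have "\<dots> = 0" using atomless[of y] by (subst AE_iff_measurable[symmetric]) auto
    finally show "emeasure (distr M borel X) (Pair y -` D) = 0" .
  qed
  finally have "emeasure M {\<omega>\<in>space M. Y \<omega> = X \<omega>} = 0" by simp
  then show ?thesis by (subst AE_iff_measurable) auto
qed

lemma (in prob_space) AE_indep_component_neq:
  assumes indep: "indep_vars (\<lambda>_. borel) X I" and "i \<in> I"
    and atomless: "\<And>a. AE \<omega> in M. X i \<omega> \<noteq> (a::real)"
    and \<phi>: "\<phi> \<in> borel_measurable (PiM (I - {i}) (\<lambda>_. borel))"
  shows "AE \<omega> in M. \<phi> (restrict (\<lambda>j. X j \<omega>) (I - {i})) \<noteq> X i \<omega>"
proof (rule AE_indep_neq[OF _ atomless])
  have "indep_var (PiM (I - {i}) (\<lambda>_. borel)) (\<lambda>\<omega>. restrict (\<lambda>j. X j \<omega>) (I - {i}))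
      (PiM {i} (\<lambda>_. borel)) (\<lambda>\<omega>. restrict (\<lambda>j. X j \<omega>) {i})"
    using \<open>i \<in> I\<close> by (intro indep_var_restrict[OF indep]) auto
  from indep_var_compose[OF this \<phi> measurable_component_singleton[of i "{i}"]]
  show "indep_var borel (\<lambda>\<omega>. \<phi> (restrict (\<lambda>j. X j \<omega>) (I - {i}))) borel (X i)"
    by (simp add: comp_def)
qed

lemma (in prob_space) AE_gains_pos:
  fixes h :: "'a \<Rightarrow> real^'k::finite" and g :: "'a \<Rightarrow> real^('k \<times> 'm::finite)"
  assumes rv: "\<And>i. gains h g i \<in> borel_measurable M"
    and nonneg: "\<forall>\<omega>\<in>space M. (\<forall>k. 0 \<le> h \<omega> $ k) \<and> (\<forall>i. 0 \<le> g \<omega> $ i)"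
    and cont: "continuous_on UNIV (joint_cdf M h g)"
  shows "AE \<omega> in M. (\<forall>k. 0 < h \<omega> $ k) \<and> (\<forall>km. 0 < g \<omega> $ km)"
proof -
  have "AE \<omega> in M. \<forall>i. gains h g i \<omega> \<noteq> 0"
    unfolding AE_all_countable using AE_gains_neq[OF rv cont] by blast
  then show ?thesis using AE_space
  proof eventually_elim
    case (elim \<omega>)
    then have "h \<omega> $ k \<noteq> 0" "g \<omega> $ km \<noteq> 0" for k km
      using spec[OF elim(1), of "Inl k"] spec[OF elim(1), of "Inr km"] by simp_all
    then show ?case using nonneg elim(2) by (simp add: less_le)
  qed
qed

text \<open>h k is independent of h j and of the interference gains of users k and j, which determine
  the value h j c k / c j that h k would have to hit for the two ratios to tie.\<close>

lemma (in prob_space) AE_ratio_untied: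
  fixes h :: "'a \<Rightarrow> real^'k::finite" and g :: "'a \<Rightarrow> real^('k \<times> 'm::finite)"
  assumes indep: "indep_vars (\<lambda>_. borel) (gains h g) UNIV"
    and cont: "continuous_on UNIV (joint_cdf M h g)" and "k \<noteq> j"
  shows "AE \<omega> in M. h \<omega> $ j * wgain mu (g \<omega>) k / wgain mu (g \<omega>) j \<noteq> h \<omega> $ k"
proof -
  have rv: "gains h g i \<in> borel_measurable M" for i using indep unfolding indep_vars_def by auto
  define \<phi> where "\<phi> x = x (Inl j) * (\<Sum>m\<in>UNIV. mu m * x (Inr (k, m))) / (\<Sum>m\<in>UNIV. mu m * x (Inr (j, m)))"
    for x :: "'k + ('k \<times> 'm) \<Rightarrow> real"
  have [measurable]: "(\<lambda>x. x (Inl j)) \<in> borel_measurable (PiM (UNIV - {Inl k}) (\<lambda>_. borel))"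
    using \<open>k \<noteq> j\<close> by (intro measurable_component_singleton) simp
  have [measurable]: "(\<lambda>x. x (Inr km)) \<in> borel_measurable (PiM (UNIV - {Inl k}) (\<lambda>_. borel))" for km
    by (intro measurable_component_singleton) simp
  have "\<phi> \<in> borel_measurable (PiM (UNIV - {Inl k}) (\<lambda>_. borel))"
    unfolding \<phi>_def by measurable
  from AE_indep_component_neq[OF indep UNIV_I AE_gains_neq[OF rv cont] this]
  show ?thesis using \<open>k \<noteq> j\<close> by (simp add: \<phi>_def wgain_def)
qed

lemma (in prob_space) AE_generic_channel:
  fixes h :: "'a \<Rightarrow> real^'k::finite" and g :: "'a \<Rightarrow> real^('k \<times> 'm::finite)"
  assumes mu: "\<forall>m. 0 \<le> mu m"
    and indep: "indep_vars (\<lambda>_. borel) (gains h g) UNIV"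
    and nonneg: "\<forall>\<omega>\<in>space M. (\<forall>k. 0 \<le> h \<omega> $ k) \<and> (\<forall>i. 0 \<le> g \<omega> $ i)"
    and cont: "continuous_on UNIV (joint_cdf M h g)"
  shows "AE \<omega> in M. generic_channel mu (h \<omega>) (g \<omega>)"
proof -
  have "gains h g i \<in> borel_measurable M" for i using indep unfolding indep_vars_def by auto
  note pos = AE_gains_pos[OF this nonneg cont]
  show ?thesis
  proof (cases "\<forall>m. mu m = 0")
    case True
    then have "wgain mu gv k = 0" for gv :: "real^('k \<times> 'm)" and k by (simp add: wgain_def)
    then show ?thesis using pos by (simp add: generic_channel_def)
  next
    case False
    then obtain m0 where "mu m0 \<noteq> 0" by blast
    then have m0: "0 < mu m0" using mu[rule_format, of m0] by simp
    have "AE \<omega> in M. \<forall>k j. k \<noteq> j \<longrightarrow> h \<omega> $ j * wgain mu (g \<omega>) k / wgain mu (g \<omega>) j \<noteq> h \<omega> $ k"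
      unfolding AE_all_countable using AE_ratio_untied[OF indep cont] by auto
    with pos show ?thesis
    proof eventually_elim
      case (elim \<omega>)
      then have c: "0 < wgain mu (g \<omega>) k" for k by (intro wgain_pos[OF mu m0]) simp
      have "inj (\<lambda>k. h \<omega> $ k / wgain mu (g \<omega>) k)"
      proof (rule injI)
        fix k j assume "h \<omega> $ k / wgain mu (g \<omega>) k = h \<omega> $ j / wgain mu (g \<omega>) j"
        then have "h \<omega> $ j * wgain mu (g \<omega>) k / wgain mu (g \<omega>) j = h \<omega> $ k"
          using c[of k] c[of j] by (simp add: field_simps)
        then show "k = j" using elim by blast
      qed
      then show ?case using elim c by (simp add: generic_channel_def)
    qed
  qed
qed

theorem theorem3p3:
  fixes M :: "'a measure"
    and h :: "'a \<Rightarrow> real^'k::finite"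
    and g :: "'a \<Rightarrow> real^('k \<times> 'm::finite)"
    and mu :: "'m \<Rightarrow> real"
    and Pst :: "'k \<Rightarrow> real"
  assumes K2: "CARD('k) \<ge> 2"
    and mu_nonneg: "\<forall>m. mu m \<ge> 0"
    and Pst_pos: "\<forall>k. Pst k > 0"
    and prob: "prob_space M"
    and indep: "prob_space.indep_vars M (\<lambda>_. borel) (gains h g) UNIV"
    and nonneg: "\<forall>\<omega>\<in>space M. (\<forall>k. h \<omega> $ k \<ge> 0) \<and> (\<forall>i. g \<omega> $ i \<ge> 0)"
    and cdf_cont: "continuous_on UNIV (joint_cdf M h g)"
    and cdf_diff: "\<forall>z. joint_cdf M h g differentiable (at z)"
  shows "AE \<omega> in M. \<forall>\<pi>. sorted_perm mu (h \<omega>) (g \<omega>) \<pi> \<longrightarrow>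
           (((\<forall>p. optimal_power mu Pst (h \<omega>) (g \<omega>) p \<longrightarrow> card {k. p k > 0} \<le> 1)
              \<longleftrightarrow> ereal (1 + h \<omega> $ \<pi> 0 * Pst (\<pi> 0))
                    \<ge> eratio (h \<omega> $ \<pi> 1) (wgain mu (g \<omega>) (\<pi> 1)))
            \<and> (ereal (1 + h \<omega> $ \<pi> 0 * Pst (\<pi> 0))
                    \<ge> eratio (h \<omega> $ \<pi> 1) (wgain mu (g \<omega>) (\<pi> 1))
               \<longrightarrow> (\<forall>p. optimal_power mu Pst (h \<omega>) (g \<omega>) p
                        \<longleftrightarrow> p = tdma_power mu Pst (h \<omega>) (g \<omega>) (\<pi> 0))))"
proof -
  interpret prob_space M by (rule prob)
  \<comment> \<open>Continuity of the distribution function suffices.\<close>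
  have "AE \<omega> in M. generic_channel mu (h \<omega>) (g \<omega>)"
    by (rule AE_generic_channel[OF mu_nonneg indep nonneg cdf_cont])
  then show ?thesis
    by (rule eventually_mono) (use tdma_characterization[OF K2 Pst_pos] in blast)
qed

end
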